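(* For all processes $s,t$, $\mathbf{d}_T(s,t)=\sup_{\Psi\in\mathcal{L}^d}\left|[\![\Psi]\!](s)-[\![\Psi]\!](t)\right|$, where $[\![\Psi]\!](u)=1-D(\Psi,\mathcal{L}(u))$.
   Context: PTS $(\mathcal{S},A,\to)$ with finitely supported distributions; processes image-finite and finite. Computations $c=s_0\xrightarrow{a_1}\cdots\xrightarrow{a_n}s_n$ via transitions $s_{i-1}\xrightarrow{a_i}\pi_i$, $s_i\in\mathrm{supp}(\pi_i)$; $\Pr(c)=\prod\pi_i(s_i)$; $|c|=n$; $\mathrm{tr}(c)=a_1\cdots a_n$; maximal = not a proper prefix of another computation from the same process; $\mathcal{C}_{\max}(z)$, $\mathcal{C}_{\max}(z,\alpha)$ those with trace $\alpha$; $\Pr$ of a set is the sum. A resolution of $s$ is a PTS $\mathcal{Z}=(Z,A,\to_{\mathcal{Z}})$ with $\mathrm{corr}\colon Z\to\mathcal{S}$ and initial state $z_s$, $\mathrm{corr}(z_s)=s$, such that $z_s$ is in no target support, every other state is in the support of a target of a transition from a different state, every $z\xrightarrow{a}_{\mathcal{Z}}\pi$ is matched by $\mathrm{corr}(z)\xrightarrow{a}\pi'$ with $\pi(z')=\pi'(\mathrm{corr}(z'))$, and each state has at most one outgoing transition; $\mathrm{res}(s)$ the set of resolutions. $TD_{\mathcal{Z}}(\alpha)=\Pr(\mathcal{C}_{\max}(z,\alpha))$. Kantorovich lifting $\mathcal{K}(d)(\pi,\pi')=\min_\omega\sum\omega(x,y)d(x,y)$ over couplings; Hausdorff lifting $\mathcal{H}(\hat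 d)(X,Y)=\max\{\sup_{x\in X}\inf_{y\in Y}\hat d(x,y),\sup_{y\in Y}\inf_{x\in X}\hat d(y,x)\}$ ($\inf\emptyset=1$, $\sup\emptyset=0$). $d_T(\alpha,\beta)=0$ if $\alpha=\beta$ else $1$; $D_T(\mathcal{Z}_1,\mathcal{Z}_2)=\mathcal{K}(d_T)(TD_{\mathcal{Z}_1},TD_{\mathcal{Z}_2})$; strong trace metric $\mathbf{d}_T(s,t)=\mathcal{H}(D_T)(\mathrm{res}(s),\mathrm{res}(t))$. Logic: trace formulae $\Phi::=\top\mid\langle a\rangle\Phi$, $\mathrm{depth}(\top)=0$, $\mathrm{depth}(\langle a\rangle\Phi)=1+\mathrm{depth}(\Phi)$; $\mathcal{L}^d$ is the set of trace distribution formulae $\bigoplus_{i\in I}r_i\Phi_i$ ($I$ finite nonempty, $\Phi_i$ pairwise distinct, $r_i\in(0,1]$, $\sum r_i=1$), identified with distributions on trace formulae. $c\models\top$ always; $c\models\langle a\rangle\Phi$ iff $c=s\xrightarrow{a}c'$ with $c'\models\Phi$. $s\models\bigoplus_i r_i\Phi_i$ iff some $\mathcal{Z}\in\mathrm{res}(s)$ with initial state $z$ satisfies $\Pr(\{c\in\mathcal{C}_{\max}(z):c\models\Phi_i,|c|=\mathrm{depth}(\Phi_i)\})=r_i$ for all $i$; $\mathcal{L}(s)$ the set of formulae in $\mathcal{L}^d$ satisfied by $s$. $d(\Phi_1,\Phi_2)=0$ if equal, else 1; $D=\mathcal{K}(d)$ on $\mathcal{L}^d$; $D(\Psi,\mathcal{L}')=\inf_{\Psi'\in\mathcal{L}'}D(\Psi,\Psi')$.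 *)

theory Defs
  imports "HOL-Probability.Probability"
begin

text \<open>A PTS over states of type 's and actions of type 'a is given by its transition
relation: a set of triples (s, a, pi) meaning s --a--> pi.\<close>

type_synonym ('s, 'a) pts = "('s \<times> 'a \<times> 's pmf) set"

definition pts_fin_supp :: "('s, 'a) pts \<Rightarrow> bool" where
  "pts_fin_supp tr \<longleftrightarrow> (\<forall>(u, a, \<pi>) \<in> tr. finite (set_pmf \<pi>))"

definition step_rel :: "('s, 'a) pts \<Rightarrow> ('s \<times> 's) set" where
  "step_rel tr = {(u, v). \<exists>a \<pi>. (u, a, \<pi>) \<in> tr \<and> v \<in> set_pmf \<pi>}"

definition finite_process :: "('s, 'a) pts \<Rightarrow> 's \<Rightarrow> bool" where
  "finite_process tr s \<longleftrightarrow>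
     (\<forall>u. (s, u) \<in> (step_rel tr)\<^sup>* \<longrightarrow> finite {(a, \<pi>). (u, a, \<pi>) \<in> tr}) \<and>
     \<not> (\<exists>f. f 0 = s \<and> (\<forall>n. (f n, f (Suc n)) \<in> step_rel tr))"

fun is_comp :: "('s, 'a) pts \<Rightarrow> 's \<Rightarrow> ('a \<times> 's pmf \<times> 's) list \<Rightarrow> bool" where
  "is_comp tr z [] = True"
| "is_comp tr z ((a, \<pi>, z') # c) = ((z, a, \<pi>) \<in> tr \<and> z' \<in> set_pmf \<pi> \<and> is_comp tr z' c)"

definition comp_prob :: "('a \<times> 's pmf \<times> 's) list \<Rightarrow> real" where
  "comp_prob c = (\<Prod>i<length c. (case c ! i of (a, \<pi>, z') \<Rightarrow> pmf \<pi> z'))"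

definition comp_trace :: "('a \<times> 's pmf \<times> 's) list \<Rightarrow> 'a list" where
  "comp_trace c = map fst c"

definition is_max_comp :: "('s, 'a) pts \<Rightarrow> 's \<Rightarrow> ('a \<times> 's pmf \<times> 's) list \<Rightarrow> bool" where
  "is_max_comp tr z c \<longleftrightarrow> is_comp tr z c \<and> \<not> (\<exists>d. d \<noteq> [] \<and> is_comp tr z (c @ d))"

definition Cmax :: "('s, 'a) pts \<Rightarrow> 's \<Rightarrow> ('a \<times> 's pmf \<times> 's) list set" where
  "Cmax tr z = {c. is_max_comp tr z c}"

definition Cmax_tr :: "('s, 'a) pts \<Rightarrow> 's \<Rightarrow> 'a list \<Rightarrow> ('a \<times> 's pmf \<times> 's) list set" where
  "Cmax_tr tr z \<alpha> = {c \<in> Cmax tr z. comp_trace c = \<alpha>}"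

definition set_prob :: "('a \<times> 's pmf \<times> 's) list set \<Rightarrow> real" where
  "set_prob C = (\<Sum>c\<in>C. comp_prob c)"

text \<open>A resolution: (set of states Z, transition relation, corr, initial state).
Resolution states are represented by natural numbers.\<close>
type_synonym ('s, 'a) resolution = "nat set \<times> (nat, 'a) pts \<times> (nat \<Rightarrow> 's) \<times> nat"

definition is_resolution :: "('s, 'a) pts \<Rightarrow> 's \<Rightarrow> ('s, 'a) resolution \<Rightarrow> bool" where
  "is_resolution tr s R \<longleftrightarrow> (case R of (Z, trZ, corr, z0) \<Rightarrow>
     z0 \<in> Z \<and> corr z0 = s \<and>
     (\<forall>(z, a, \<pi>) \<in> trZ. z \<in> Z \<and> set_pmf \<pi> \<subseteq> Z) \<and>
     (\<forall>(z, a, \<pi>) \<in> trZ. z0 \<notin> set_pmf \<pi>) \<and>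
     (\<forall>z \<in> Z. z \<noteq> z0 \<longrightarrow> (\<exists>z' a \<pi>. (z', a, \<pi>) \<in> trZ \<and> z' \<noteq> z \<and> z \<in> set_pmf \<pi>)) \<and>
     (\<forall>(z, a, \<pi>) \<in> trZ. \<exists>\<pi>'. (corr z, a, \<pi>') \<in> tr \<and>
         (\<forall>z' \<in> set_pmf \<pi>. pmf \<pi> z' = pmf \<pi>' (corr z'))) \<and>
     (\<forall>z a \<pi> b \<rho>. (z, a, \<pi>) \<in> trZ \<longrightarrow> (z, b, \<rho>) \<in> trZ \<longrightarrow> a = b \<and> \<pi> = \<rho>))"

definition res :: "('s, 'a) pts \<Rightarrow> 's \<Rightarrow> ('s, 'a) resolution set" where
  "res tr s = {R. is_resolution tr s R}"

definition res_trans :: "('s, 'a) resolution \<Rightarrow> (nat, 'a) pts" where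
  "res_trans R = fst (snd R)"

definition res_init :: "('s, 'a) resolution \<Rightarrow> nat" where
  "res_init R = snd (snd (snd R))"

definition TD :: "('s, 'a) resolution \<Rightarrow> 'a list \<Rightarrow> real" where
  "TD R \<alpha> = set_prob (Cmax_tr (res_trans R) (res_init R) \<alpha>)"

definition is_coupling :: "('x \<Rightarrow> real) \<Rightarrow> ('y \<Rightarrow> real) \<Rightarrow> ('x \<times> 'y \<Rightarrow> real) \<Rightarrow> bool" where
  "is_coupling \<mu> \<nu> \<omega> \<longleftrightarrow> finite {p. \<omega> p \<noteq> 0} \<and> (\<forall>p. 0 \<le> \<omega> p) \<and>
     (\<forall>x. (\<Sum>y\<in>{y. \<omega> (x, y) \<noteq> 0}. \<omega> (x, y)) = \<mu> x) \<and>
     (\<forall>y. (\<Sum>x\<in>{x. \<omega> (x, y) \<noteq> 0}. \<omega> (x, y)) = \<nu> y)"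

definition kantorovich :: "('x \<Rightarrow> 'x \<Rightarrow> real) \<Rightarrow> ('x \<Rightarrow> real) \<Rightarrow> ('x \<Rightarrow> real) \<Rightarrow> real" where
  "kantorovich d \<mu> \<nu> =
     Inf {(\<Sum>p\<in>{p. \<omega> p \<noteq> 0}. \<omega> p * d (fst p) (snd p)) | \<omega>. is_coupling \<mu> \<nu> \<omega>}"

definition inf1 :: "real set \<Rightarrow> real" where
  "inf1 S = (if S = {} then 1 else Inf S)"

definition sup0 :: "real set \<Rightarrow> real" where
  "sup0 S = (if S = {} then 0 else Sup S)"

definition hausdorff :: "('x \<Rightarrow> 'x \<Rightarrow> real) \<Rightarrow> 'x set \<Rightarrow> 'x set \<Rightarrow> real" where
  "hausdorff d X Y = max (sup0 ((\<lambda>x. inf1 ((\<lambda>y. d x y) ` Y)) ` X))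
                         (sup0 ((\<lambda>y. inf1 ((\<lambda>x. d y x) ` X)) ` Y))"

definition d_trace :: "'a list \<Rightarrow> 'a list \<Rightarrow> real" where
  "d_trace \<alpha> \<beta> = (if \<alpha> = \<beta> then 0 else 1)"

definition D_T :: "('s, 'a) resolution \<Rightarrow> ('s, 'a) resolution \<Rightarrow> real" where
  "D_T R1 R2 = kantorovich d_trace (TD R1) (TD R2)"

definition strong_trace_metric :: "('s, 'a) pts \<Rightarrow> 's \<Rightarrow> 's \<Rightarrow> real" where
  "strong_trace_metric tr s t = hausdorff D_T (res tr s) (res tr t)"

datatype 'a tformula = TTop | Diam 'a "'a tformula"

fun depth :: "'a tformula \<Rightarrow> nat" where
  "depth TTop = 0"
| "depth (Diam a \<Phi>) = Suc (depth \<Phi>)"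

fun comp_sat :: "('a \<times> 's pmf \<times> 's) list \<Rightarrow> 'a tformula \<Rightarrow> bool" where
  "comp_sat c TTop = True"
| "comp_sat [] (Diam a \<Phi>) = False"
| "comp_sat ((b, \<pi>, z) # c) (Diam a \<Phi>) = (b = a \<and> comp_sat c \<Phi>)"

definition Ld :: "'a tformula pmf set" where
  "Ld = {\<Psi>. finite (set_pmf \<Psi>)}"

definition sat_dist :: "('s, 'a) pts \<Rightarrow> 's \<Rightarrow> 'a tformula pmf \<Rightarrow> bool" where
  "sat_dist tr s \<Psi> \<longleftrightarrow> (\<exists>R \<in> res tr s. \<forall>\<Phi> \<in> set_pmf \<Psi>.
      set_prob {c \<in> Cmax (res_trans R) (res_init R). comp_sat c \<Phi> \<and> length c = depth \<Phi>}
        = pmf \<Psi> \<Phi>)"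

definition Lsat :: "('s, 'a) pts \<Rightarrow> 's \<Rightarrow> 'a tformula pmf set" where
  "Lsat tr s = {\<Psi> \<in> Ld. sat_dist tr s \<Psi>}"

definition d_form :: "'a tformula \<Rightarrow> 'a tformula \<Rightarrow> real" where
  "d_form \<Phi>1 \<Phi>2 = (if \<Phi>1 = \<Phi>2 then 0 else 1)"

definition D_form :: "'a tformula pmf \<Rightarrow> 'a tformula pmf \<Rightarrow> real" where
  "D_form \<Psi>1 \<Psi>2 = kantorovich d_form (pmf \<Psi>1) (pmf \<Psi>2)"

definition D_set :: "'a tformula pmf \<Rightarrow> 'a tformula pmf set \<Rightarrow> real" where
  "D_set \<Psi> L = inf1 ((\<lambda>\<Psi>'. D_form \<Psi> \<Psi>') ` L)"

definition sem :: "('s, 'a) pts \<Rightarrow> 'a tformula pmf \<Rightarrow> 's \<Rightarrow> real" where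
  "sem tr \<Psi> u = 1 - D_set \<Psi> (Lsat tr u)"

end

theory Submission
  imports Defs
begin

text \<open>Trace formulae of the shape \<open>\<langle>a\<^sub>1\<rangle>\<dots>\<langle>a\<^sub>n\<rangle>\<top>\<close> correspond bijectively to traces, and a
  maximal computation satisfies such a formula at exact depth \<open>n\<close> iff its trace is
  \<open>a\<^sub>1\<dots>a\<^sub>n\<close>. For a finite process every resolution has finitely many maximal computations
  of total probability 1, so its trace distribution, read on formulae, lies in \<open>\<L>\<^sup>d\<close>; and a
  formula distribution is satisfied by \<open>s\<close> iff it is such a distribution. Thus \<open>\<L>(s)\<close> is
  the image of \<open>res(s)\<close>, and \<open>D\<^sub>T\<close> is \<open>D\<close> transported along this map, both being the
  Kantorovich lifting of the discrete metric, i.e. total variation distance.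

  The theorem then becomes a fact about any pseudometric \<open>\<delta>\<close> bounded by 1: for nonempty
  \<open>X\<close>, \<open>Y\<close> the Hausdorff distance equals \<open>sup\<^sub>p |\<delta>(p,X) - \<delta>(p,Y)|\<close>. The triangle
  inequality bounds every \<open>|\<delta>(p,X) - \<delta>(p,Y)|\<close> by the Hausdorff distance, and points
  \<open>p \<in> X\<close> resp. \<open>p \<in> Y\<close> attain its two one-sided parts.\<close>

section \<open>Kantorovich lifting of the discrete metric\<close>

lemma coupling_le_marginals:
  assumes "is_coupling \<mu> \<nu> \<omega>"
  shows "\<omega> (x, y) \<le> \<mu> x" and "\<omega> (x, y) \<le> \<nu> y"
proof -
  from assms have fin: "finite {p. \<omega> p \<noteq> 0}" and nonneg: "\<And>p. 0 \<le> \<omega> p"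
    and row: "(\<Sum>y'\<in>{y'. \<omega> (x, y') \<noteq> 0}. \<omega> (x, y')) = \<mu> x"
    and col: "(\<Sum>x'\<in>{x'. \<omega> (x', y) \<noteq> 0}. \<omega> (x', y)) = \<nu> y"
    unfolding is_coupling_def by auto
  have "finite {y'. \<omega> (x, y') \<noteq> 0}"
    using finite_imageI[OF fin, of snd] by (rule finite_subset[rotated]) force
  then show "\<omega> (x, y) \<le> \<mu> x"
    unfolding row[symmetric] using nonneg
    by (cases "\<omega> (x, y) = 0") (auto intro: member_le_sum sum_nonneg)
  have "finite {x'. \<omega> (x', y) \<noteq> 0}"
    using finite_imageI[OF fin, of fst] by (rule finite_subset[rotated]) force
  then show "\<omega> (x, y) \<le> \<nu> y"
    unfolding col[symmetric] using nonneg
    by (cases "\<omega> (x, y) = 0") (auto intro: member_le_sum sum_nonneg)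
qed

lemma coupling_support_subset:
  assumes "is_coupling \<mu> \<nu> \<omega>" and "\<And>x. x \<notin> S \<Longrightarrow> \<mu> x = 0" and "\<And>x. x \<notin> S \<Longrightarrow> \<nu> x = 0"
  shows "{p. \<omega> p \<noteq> 0} \<subseteq> S \<times> S"
proof safe
  fix x y assume "\<omega> (x, y) \<noteq> 0"
  moreover have "0 \<le> \<omega> (x, y)" using assms(1) by (simp add: is_coupling_def)
  ultimately show "x \<in> S" "y \<in> S"
    using coupling_le_marginals[OF assms(1), of x y] assms(2,3) by force+
qed

lemma is_couplingI_finite:
  assumes "finite S" and "\<And>p. 0 \<le> \<omega> p" and supp: "\<And>x y. \<omega> (x, y) \<noteq> 0 \<Longrightarrow> x \<in> S \<and> y \<in> S"
    and "\<And>x. x \<in> S \<Longrightarrow> (\<Sum>y\<in>S. \<omega> (x, y)) = \<mu> x" and "\<And>x. x \<notin> S \<Longrightarrow> \<mu> x = 0"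
    and "\<And>y. y \<in> S \<Longrightarrow> (\<Sum>x\<in>S. \<omega> (x, y)) = \<nu> y" and "\<And>y. y \<notin> S \<Longrightarrow> \<nu> y = 0"
  shows "is_coupling \<mu> \<nu> \<omega>"
  unfolding is_coupling_def
proof (intro conjI allI)
  show "finite {p. \<omega> p \<noteq> 0}"
    by (rule finite_subset[of _ "S \<times> S"]) (use assms(1) supp in auto)
  show "(\<Sum>y\<in>{y. \<omega> (x, y) \<noteq> 0}. \<omega> (x, y)) = \<mu> x" for x
  proof (cases "x \<in> S")
    case True
    have "(\<Sum>y\<in>{y. \<omega> (x, y) \<noteq> 0}. \<omega> (x, y)) = (\<Sum>y\<in>S. \<omega> (x, y))"
      by (rule sum.mono_neutral_left) (use assms(1) supp in auto)
    with True assms(4) show ?thesis by simp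
  next
    case False
    then have "{y. \<omega> (x, y) \<noteq> 0} = {}" using supp by blast
    with False assms(5) show ?thesis by simp
  qed
  show "(\<Sum>x\<in>{x. \<omega> (x, y) \<noteq> 0}. \<omega> (x, y)) = \<nu> y" for y
  proof (cases "y \<in> S")
    case True
    have "(\<Sum>x\<in>{x. \<omega> (x, y) \<noteq> 0}. \<omega> (x, y)) = (\<Sum>x\<in>S. \<omega> (x, y))"
      by (rule sum.mono_neutral_left) (use assms(1) supp in auto)
    with True assms(6) show ?thesis by simp
  next
    case False
    then have "{x. \<omega> (x, y) \<noteq> 0} = {}" using supp by blast
    with False assms(7) show ?thesis by simp
  qed
qed (use assms(2) in auto)

lemma coupling_discrete_cost:
  assumes \<omega>: "is_coupling \<mu> \<nu> \<omega>" and S: "finite S" "\<And>x. x \<notin> S \<Longrightarrow> \<mu> x = 0" "\<And>x. x \<notin> S \<Longrightarrow> \<nu> x = 0"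
    and "sum \<mu> S = 1"
  shows "(\<Sum>p\<in>{p. \<omega> p \<noteq> 0}. \<omega> p * (if fst p = snd p then 0 else 1)) = 1 - (\<Sum>x\<in>S. \<omega> (x, x))"
proof -
  have supp: "{p. \<omega> p \<noteq> 0} \<subseteq> S \<times> S" by (rule coupling_support_subset[OF \<omega> S(2,3)])
  have row: "(\<Sum>y\<in>S. \<omega> (x, y)) = \<mu> x" for x
  proof -
    have "(\<Sum>y\<in>S. \<omega> (x, y)) = (\<Sum>y\<in>{y. \<omega> (x, y) \<noteq> 0}. \<omega> (x, y))"
      by (rule sum.mono_neutral_right) (use supp S(1) in auto)
    with \<omega> show ?thesis by (simp add: is_coupling_def)
  qed
  have "(\<Sum>p\<in>{p. \<omega> p \<noteq> 0}. \<omega> p * (if fst p = snd p then 0 else 1))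
      = (\<Sum>p\<in>S \<times> S. \<omega> p * (if fst p = snd p then 0 else 1))"
    by (rule sum.mono_neutral_left) (use supp S(1) in auto)
  also have "\<dots> = (\<Sum>x\<in>S. \<Sum>y\<in>S. \<omega> (x, y) * (if x = y then 0 else 1))"
    by (simp add: sum.cartesian_product split_def)
  also have "\<dots> = (\<Sum>x\<in>S. (\<Sum>y\<in>S. \<omega> (x, y)) - \<omega> (x, x))"
  proof (rule sum.cong[OF refl])
    fix x assume "x \<in> S"
    then show "(\<Sum>y\<in>S. \<omega> (x, y) * (if x = y then 0 else 1)) = (\<Sum>y\<in>S. \<omega> (x, y)) - \<omega> (x, x)"
      by (simp add: sum.remove[OF S(1)], intro sum.cong) auto
  qed
  also have "\<dots> = 1 - (\<Sum>x\<in>S. \<omega> (x, x))"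
    using assms(5) by (simp add: row sum_subtractf)
  finally show ?thesis .
qed

text \<open>The maximal coupling: mass \<open>min (\<mu> x) (\<nu> x)\<close> on the diagonal, and the residuals
  \<open>\<mu> - min \<mu> \<nu>\<close>, \<open>\<nu> - min \<mu> \<nu>\<close> (which have disjoint supports) coupled independently.\<close>
lemma coupling_with_min_diagonal:
  assumes S: "finite S" "\<And>x. x \<notin> S \<Longrightarrow> \<mu> x = 0" "\<And>x. x \<notin> S \<Longrightarrow> \<nu> x = 0"
    and nonneg: "\<And>x. 0 \<le> \<mu> x" "\<And>x. 0 \<le> \<nu> x"
    and sum1: "sum \<mu> S = 1" "sum \<nu> S = 1"
  shows "\<exists>\<omega>. is_coupling \<mu> \<nu> \<omega> \<and> (\<forall>x. \<omega> (x, x) = min (\<mu> x) (\<nu> x))"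
proof -
  define m where "m x = min (\<mu> x) (\<nu> x)" for x
  define M where "M = (\<Sum>x\<in>S. m x)"
  define r where "r x = \<mu> x - m x" for x
  define r' where "r' x = \<nu> x - m x" for x
  define \<omega> where "\<omega> p = (if fst p = snd p then m (fst p) else 0) + r (fst p) * r' (snd p) / (1 - M)" for p
  have r_nonneg: "0 \<le> r x" "0 \<le> r' x" for x by (auto simp: r_def r'_def m_def)
  have off_S: "m x = 0" "r x = 0" "r' x = 0" if "x \<notin> S" for x
    using S that by (auto simp: m_def r_def r'_def)
  have sum_r: "sum r S = 1 - M" "sum r' S = 1 - M"
    using sum1 by (auto simp: r_def r'_def M_def sum_subtractf)
  have M_le_1: "M \<le> 1" using sum_r(1) r_nonneg sum_nonneg[of S r] by auto
  have r_normalized: "r x * (1 - M) / (1 - M) = r x" "r' x * (1 - M) / (1 - M) = r' x" for x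
  proof -
    have "r x = 0 \<and> r' x = 0" if "M = 1"
      using that sum_r r_nonneg off_S S(1) by (cases "x \<in> S") (auto simp: sum_nonneg_eq_0_iff)
    then show "r x * (1 - M) / (1 - M) = r x" "r' x * (1 - M) / (1 - M) = r' x" by auto
  qed
  have "is_coupling \<mu> \<nu> \<omega>"
  proof (rule is_couplingI_finite[OF S(1)])
    show "0 \<le> \<omega> p" for p
      using r_nonneg M_le_1 nonneg by (auto simp: \<omega>_def m_def)
    show "\<omega> (x, y) \<noteq> 0 \<Longrightarrow> x \<in> S \<and> y \<in> S" for x y
      using off_S[of x] off_S[of y] by (cases "x \<in> S"; cases "y \<in> S") (auto simp: \<omega>_def split: if_split_asm)
    have "(\<Sum>y\<in>S. \<omega> (x, y)) = (if x \<in> S then m x else 0) + r x * sum r' S / (1 - M)" for x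
      unfolding \<omega>_def by (simp add: sum.distrib sum.delta' S(1) sum_distrib_left sum_divide_distrib)
    then show "(\<Sum>y\<in>S. \<omega> (x, y)) = \<mu> x" if "x \<in> S" for x
      using that r_normalized(1)[of x] sum_r(2) by (simp add: r_def)
    have "(\<Sum>x\<in>S. \<omega> (x, y)) = (if y \<in> S then m y else 0) + sum r S * r' y / (1 - M)" for y
      unfolding \<omega>_def by (simp add: sum.distrib sum.delta S(1) sum_distrib_right sum_divide_distrib)
    then show "(\<Sum>x\<in>S. \<omega> (x, y)) = \<nu> y" if "y \<in> S" for y
      using that r_normalized(2)[of y] sum_r(1) by (simp add: r'_def mult.commute)
  qed (use S(2,3) in auto)
  moreover have "\<omega> (x, x) = m x" for x
    by (auto simp: \<omega>_def r_def r'_def m_def min_def)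
  ultimately show ?thesis by (auto simp: m_def)
qed

lemma kantorovich_discrete:
  assumes S: "finite S" "\<And>x. x \<notin> S \<Longrightarrow> \<mu> x = 0" "\<And>x. x \<notin> S \<Longrightarrow> \<nu> x = 0"
    and nonneg: "\<And>x. 0 \<le> \<mu> x" "\<And>x. 0 \<le> \<nu> x"
    and sum1: "sum \<mu> S = 1" "sum \<nu> S = 1"
  shows "kantorovich (\<lambda>x y. if x = y then 0 else 1) \<mu> \<nu> = 1 - (\<Sum>x\<in>S. min (\<mu> x) (\<nu> x))"
  unfolding kantorovich_def
proof (rule cInf_eq_minimum)
  obtain \<omega> where \<omega>: "is_coupling \<mu> \<nu> \<omega>" "\<And>x. \<omega> (x, x) = min (\<mu> x) (\<nu> x)"
    using coupling_with_min_diagonal[OF assms] by blast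
  have "(\<Sum>p\<in>{p. \<omega> p \<noteq> 0}. \<omega> p * (if fst p = snd p then 0 else 1)) = 1 - (\<Sum>x\<in>S. min (\<mu> x) (\<nu> x))"
    using coupling_discrete_cost[OF \<omega>(1) S sum1(1)] \<omega>(2) by simp
  with \<omega>(1) show "1 - (\<Sum>x\<in>S. min (\<mu> x) (\<nu> x))
    \<in> {\<Sum>p\<in>{p. \<omega> p \<noteq> 0}. \<omega> p * (if fst p = snd p then 0 else 1) |\<omega>. is_coupling \<mu> \<nu> \<omega>}"
    by force
next
  fix c
  assume "c \<in> {\<Sum>p\<in>{p. \<omega> p \<noteq> 0}. \<omega> p * (if fst p = snd p then 0 else 1) |\<omega>. is_coupling \<mu> \<nu> \<omega>}"
  then obtain \<omega> where \<omega>: "is_coupling \<mu> \<nu> \<omega>"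
    and c: "c = (\<Sum>p\<in>{p. \<omega> p \<noteq> 0}. \<omega> p * (if fst p = snd p then 0 else 1))" by blast
  have "(\<Sum>x\<in>S. \<omega> (x, x)) \<le> (\<Sum>x\<in>S. min (\<mu> x) (\<nu> x))"
    using coupling_le_marginals[OF \<omega>] by (intro sum_mono) simp
  then show "1 - (\<Sum>x\<in>S. min (\<mu> x) (\<nu> x)) \<le> c"
    unfolding c using coupling_discrete_cost[OF \<omega> S sum1(1)] by linarith
qed

section \<open>Maximal computations of resolutions\<close>

lemma comp_prob_Cons [simp]: "comp_prob ((a, \<pi>, z) # c) = pmf \<pi> z * comp_prob c"
  unfolding comp_prob_def length_Cons prod.lessThan_Suc_shift by simp

lemma comp_prob_nonneg: "0 \<le> comp_prob c"
  unfolding comp_prob_def by (auto intro!: prod_nonneg split: prod.splits)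

lemma finite_if_pmf_ge:
  assumes "0 < e" and "\<And>z. z \<in> A \<Longrightarrow> e \<le> pmf \<pi> z"
  shows "finite A"
proof (rule ccontr)
  assume "infinite A"
  obtain n :: nat where n: "1 / e < n" using reals_Archimedean2 by blast
  obtain B where B: "finite B" "card B = n" "B \<subseteq> A"
    using infinite_arbitrarily_large[OF \<open>infinite A\<close>] by blast
  have "n * e \<le> sum (pmf \<pi>) B"
    using sum_mono[of B "\<lambda>_. e" "pmf \<pi>"] assms(2) B by auto
  also have "\<dots> = measure (measure_pmf \<pi>) B" using B(1) by (simp add: measure_measure_pmf_finite)
  also have "\<dots> \<le> 1" by simp
  finally show False using n \<open>0 < e\<close> by (simp add: field_simps)
qed

lemma finite_set_pmf_if_pmf_factors:
  assumes "finite (set_pmf \<pi>')" and "\<And>z. z \<in> set_pmf \<pi> \<Longrightarrow> pmf \<pi> z = pmf \<pi>' (f z)"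
  shows "finite (set_pmf \<pi>)"
proof (rule finite_if_pmf_ge)
  let ?e = "Min (pmf \<pi>' ` set_pmf \<pi>')"
  show "0 < ?e" using assms(1) by (simp add: set_pmf_not_empty pmf_positive)
  fix z assume "z \<in> set_pmf \<pi>"
  then have "f z \<in> set_pmf \<pi>'" using assms(2) by (metis pmf_positive pmf_positive_iff)
  then show "?e \<le> pmf \<pi> z" using assms \<open>z \<in> set_pmf \<pi>\<close> by simp
qed

lemma Cmax_if_no_transition:
  assumes "\<And>a \<pi>. (z, a, \<pi>) \<notin> trZ"
  shows "Cmax trZ z = {[]}"
proof -
  have "is_comp trZ z c \<longleftrightarrow> c = []" for c using assms by (cases c) auto
  then show ?thesis unfolding Cmax_def is_max_comp_def by auto
qed

lemma Cmax_if_transition: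
  assumes step: "(z, a, \<pi>) \<in> trZ" and det: "\<And>b \<rho>. (z, b, \<rho>) \<in> trZ \<Longrightarrow> b = a \<and> \<rho> = \<pi>"
  shows "Cmax trZ z = (\<lambda>(z', c). (a, \<pi>, z') # c) ` (SIGMA z':set_pmf \<pi>. Cmax trZ z')"
proof
  show "Cmax trZ z \<subseteq> (\<lambda>(z', c). (a, \<pi>, z') # c) ` (SIGMA z':set_pmf \<pi>. Cmax trZ z')"
  proof
    fix c assume "c \<in> Cmax trZ z"
    then have comp: "is_comp trZ z c" and max: "\<And>d. d \<noteq> [] \<Longrightarrow> \<not> is_comp trZ z (c @ d)"
      unfolding Cmax_def is_max_comp_def by auto
    obtain z1 where "z1 \<in> set_pmf \<pi>" using set_pmf_not_empty[of \<pi>] by blast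
    then have "c \<noteq> []" using max[of "[(a, \<pi>, z1)]"] step by auto
    then obtain b \<rho> z' c' where c_Cons: "c = (b, \<rho>, z') # c'" by (metis list.exhaust prod_cases3)
    with comp det have ba: "b = a" "\<rho> = \<pi>" and "z' \<in> set_pmf \<pi>" "is_comp trZ z' c'" by auto
    moreover have "\<not> is_comp trZ z' (c' @ d)" if "d \<noteq> []" for d
      using max[OF that] comp c_Cons by auto
    ultimately have "c' \<in> Cmax trZ z'" unfolding Cmax_def is_max_comp_def by blast
    then show "c \<in> (\<lambda>(z', c). (a, \<pi>, z') # c) ` (SIGMA z':set_pmf \<pi>. Cmax trZ z')"
      using c_Cons ba \<open>z' \<in> set_pmf \<pi>\<close> by (auto intro!: image_eqI[where x="(z', c')"])
  qed
  show "(\<lambda>(z', c). (a, \<pi>, z') # c) ` (SIGMA z':set_pmf \<pi>. Cmax trZ z') \<subseteq> Cmax trZ z"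
    using step unfolding Cmax_def is_max_comp_def by auto
qed

lemma finite_process_acc:
  assumes "finite_process tr s"
  shows "s \<in> Wellfounded.acc ((step_rel tr)\<inverse>)"
proof (rule ccontr)
  assume "s \<notin> Wellfounded.acc ((step_rel tr)\<inverse>)"
  then have "\<exists>f. \<forall>n. (f n \<notin> Wellfounded.acc ((step_rel tr)\<inverse>) \<and> (n = 0 \<longrightarrow> f n = s))
    \<and> (f n, f (Suc n)) \<in> step_rel tr"
    by (intro dependent_nat_choice) (auto elim: not_acc_down)
  then show False using assms unfolding finite_process_def by blast
qed

lemma Cmax_finite_sum_1:
  assumes fin_supp: "pts_fin_supp tr"
    and match: "\<And>z a \<pi>. (z, a, \<pi>) \<in> trZ \<Longrightarrow>
      \<exists>\<pi>'. (corr z, a, \<pi>') \<in> tr \<and> (\<forall>z'\<in>set_pmf \<pi>. pmf \<pi> z' = pmf \<pi>' (corr z'))"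
    and det: "\<And>z a \<pi> b \<rho>. (z, a, \<pi>) \<in> trZ \<Longrightarrow> (z, b, \<rho>) \<in> trZ \<Longrightarrow> b = a \<and> \<rho> = \<pi>"
    and acc: "corr z \<in> Wellfounded.acc ((step_rel tr)\<inverse>)"
  shows "finite (Cmax trZ z) \<and> sum comp_prob (Cmax trZ z) = 1"
  using acc
proof (induction "corr z" arbitrary: z rule: acc_induct_rule)
  \<comment> \<open>well-founded induction on the state of the original process that \<open>z\<close> resolves\<close>
  case (1 z)
  show ?case
  proof (cases "\<exists>a \<pi>. (z, a, \<pi>) \<in> trZ")
    case False
    then have "Cmax trZ z = {[]}" by (intro Cmax_if_no_transition) blast
    then show ?thesis by (simp add: comp_prob_def)
  next
    case True
    then obtain a \<pi> where step: "(z, a, \<pi>) \<in> trZ" by blast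
    then obtain \<pi>' where \<pi>': "(corr z, a, \<pi>') \<in> tr" "\<And>z'. z' \<in> set_pmf \<pi> \<Longrightarrow> pmf \<pi> z' = pmf \<pi>' (corr z')"
      using match[OF step] by blast
    have "finite (set_pmf \<pi>')" using fin_supp \<pi>'(1) unfolding pts_fin_supp_def by fast
    then have fin: "finite (set_pmf \<pi>)" using \<pi>'(2) by (rule finite_set_pmf_if_pmf_factors)
    have IH: "finite (Cmax trZ z') \<and> sum comp_prob (Cmax trZ z') = 1" if "z' \<in> set_pmf \<pi>" for z'
    proof (rule "1.hyps")
      have "corr z' \<in> set_pmf \<pi>'" using \<pi>'(2)[OF that] that by (metis pmf_positive pmf_positive_iff)
      with \<pi>'(1) show "(corr z', corr z) \<in> (step_rel tr)\<inverse>" by (auto simp: step_rel_def)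
    qed
    have Cmax_z: "Cmax trZ z = (\<lambda>(z', c). (a, \<pi>, z') # c) ` (SIGMA z':set_pmf \<pi>. Cmax trZ z')"
      using Cmax_if_transition[OF step det[OF step]] .
    have inj: "inj_on (\<lambda>(z', c). (a, \<pi>, z') # c) (SIGMA z':set_pmf \<pi>. Cmax trZ z')"
      by (auto simp: inj_on_def)
    have "sum comp_prob (Cmax trZ z)
        = (\<Sum>p\<in>(SIGMA z':set_pmf \<pi>. Cmax trZ z'). comp_prob ((a, \<pi>, fst p) # snd p))"
      unfolding Cmax_z by (subst sum.reindex[OF inj]) (simp add: split_def)
    also have "\<dots> = (\<Sum>z'\<in>set_pmf \<pi>. \<Sum>c\<in>Cmax trZ z'. pmf \<pi> z' * comp_prob c)"
      using sum.Sigma[OF fin, of "Cmax trZ" "\<lambda>z' c. pmf \<pi> z' * comp_prob c"] IH by (simp add: split_def)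
    also have "\<dots> = (\<Sum>z'\<in>set_pmf \<pi>. pmf \<pi> z')"
      by (rule sum.cong) (use IH in \<open>auto simp: sum_distrib_left[symmetric]\<close>)
    also have "\<dots> = 1" using fin by (simp add: sum_pmf_eq_1)
    moreover have "finite (Cmax trZ z)" unfolding Cmax_z using fin IH by auto
    ultimately show ?thesis by simp
  qed
qed

lemma resolution_Cmax_finite_sum_1:
  assumes "pts_fin_supp tr" and "finite_process tr u" and "R \<in> res tr u"
  shows "finite (Cmax (res_trans R) (res_init R))" and "set_prob (Cmax (res_trans R) (res_init R)) = 1"
proof -
  obtain Z trZ corr z0 where R: "R = (Z, trZ, corr, z0)" by (metis prod_cases4)
  with assms(3) have "is_resolution tr u (Z, trZ, corr, z0)" by (simp add: res_def)
  then have "corr z0 = u"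
    and "\<And>z a \<pi>. (z, a, \<pi>) \<in> trZ \<Longrightarrow>
      \<exists>\<pi>'. (corr z, a, \<pi>') \<in> tr \<and> (\<forall>z'\<in>set_pmf \<pi>. pmf \<pi> z' = pmf \<pi>' (corr z'))"
    and "\<And>z a \<pi> b \<rho>. (z, a, \<pi>) \<in> trZ \<Longrightarrow> (z, b, \<rho>) \<in> trZ \<Longrightarrow> b = a \<and> \<rho> = \<pi>"
    unfolding is_resolution_def by fast+
  then have "finite (Cmax trZ z0) \<and> sum comp_prob (Cmax trZ z0) = 1"
    using Cmax_finite_sum_1[OF assms(1)] finite_process_acc[OF assms(2)] by metis
  then show "finite (Cmax (res_trans R) (res_init R))" "set_prob (Cmax (res_trans R) (res_init R)) = 1"
    by (simp_all add: R res_trans_def res_init_def set_prob_def)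
qed

section \<open>Trace distributions as trace distribution formulae\<close>

fun trace_formula :: "'a list \<Rightarrow> 'a tformula" where
  "trace_formula [] = TTop"
| "trace_formula (a # \<alpha>) = Diam a (trace_formula \<alpha>)"

fun formula_trace :: "'a tformula \<Rightarrow> 'a list" where
  "formula_trace TTop = []"
| "formula_trace (Diam a \<Phi>) = a # formula_trace \<Phi>"

lemma formula_trace_trace_formula [simp]: "formula_trace (trace_formula \<alpha>) = \<alpha>"
  by (induction \<alpha>) auto

lemma trace_formula_formula_trace [simp]: "trace_formula (formula_trace \<Phi>) = \<Phi>"
  by (induction \<Phi>) auto

lemma sum_image_trace_formula: "sum f (trace_formula ` A) = (\<Sum>\<alpha>\<in>A. f (trace_formula \<alpha>))"
  by (rule sum.reindex_cong[OF inj_on_inverseI[where g = formula_trace]]) auto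

lemma comp_sat_depth_iff: "comp_sat c \<Phi> \<and> length c = depth \<Phi> \<longleftrightarrow> comp_trace c = formula_trace \<Phi>"
  by (induction c \<Phi> rule: comp_sat.induct) (auto simp: comp_trace_def)

definition res_traces :: "('s, 'a) resolution \<Rightarrow> 'a list set" where
  "res_traces R = comp_trace ` Cmax (res_trans R) (res_init R)"

lemma TD_nonneg: "0 \<le> TD R \<alpha>"
  by (simp add: TD_def set_prob_def sum_nonneg comp_prob_nonneg)

lemma TD_eq_0_if_notin_res_traces:
  assumes "\<alpha> \<notin> res_traces R"
  shows "TD R \<alpha> = 0"
proof -
  from assms have "Cmax_tr (res_trans R) (res_init R) \<alpha> = {}"
    by (auto simp: Cmax_tr_def res_traces_def)
  then show ?thesis by (simp add: TD_def set_prob_def)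
qed

lemma
  assumes "pts_fin_supp tr" and "finite_process tr u" and "R \<in> res tr u"
  shows finite_res_traces: "finite (res_traces R)"
    and sum_TD_res_traces: "sum (TD R) (res_traces R) = 1"
proof -
  let ?C = "Cmax (res_trans R) (res_init R)"
  note C = resolution_Cmax_finite_sum_1[OF assms]
  then show "finite (res_traces R)" by (simp add: res_traces_def)
  have "sum (TD R) (res_traces R) = (\<Sum>\<alpha>\<in>comp_trace ` ?C. sum comp_prob {c \<in> ?C. comp_trace c = \<alpha>})"
    by (simp add: TD_def set_prob_def Cmax_tr_def res_traces_def)
  also have "\<dots> = sum comp_prob ?C" by (rule sum.image_gen[OF C(1), symmetric])
  finally show "sum (TD R) (res_traces R) = 1" using C(2) by (simp add: set_prob_def)
qed

definition formula_dist :: "('s, 'a) resolution \<Rightarrow> 'a tformula pmf" where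
  "formula_dist R = embed_pmf (\<lambda>\<Phi>. TD R (formula_trace \<Phi>))"

lemma
  assumes "pts_fin_supp tr" and "finite_process tr u" and "R \<in> res tr u"
  shows pmf_formula_dist: "pmf (formula_dist R) \<Phi> = TD R (formula_trace \<Phi>)"
    and set_formula_dist: "set_pmf (formula_dist R) \<subseteq> trace_formula ` res_traces R"
proof -
  have out: "TD R (formula_trace \<Phi>) = 0" if "\<Phi> \<notin> trace_formula ` res_traces R" for \<Phi>
    using that by (intro TD_eq_0_if_notin_res_traces) (metis image_eqI trace_formula_formula_trace)
  have "(\<integral>\<^sup>+\<Phi>. ennreal (TD R (formula_trace \<Phi>)) \<partial>count_space UNIV)
      = (\<Sum>\<Phi>\<in>trace_formula ` res_traces R. ennreal (TD R (formula_trace \<Phi>)))"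
    using finite_res_traces[OF assms] out by (intro nn_integral_count_space') auto
  also have "\<dots> = 1"
    using sum_TD_res_traces[OF assms] by (simp add: sum_image_trace_formula TD_nonneg)
  finally show pmf: "pmf (formula_dist R) \<Phi> = TD R (formula_trace \<Phi>)" for \<Phi>
    unfolding formula_dist_def by (intro pmf_embed_pmf) (auto simp: TD_nonneg)
  show "set_pmf (formula_dist R) \<subseteq> trace_formula ` res_traces R"
    using out by (fastforce simp: set_pmf_iff pmf)
qed

lemma formula_dist_in_Ld:
  assumes "pts_fin_supp tr" and "finite_process tr u" and "R \<in> res tr u"
  shows "formula_dist R \<in> Ld"
  using finite_subset[OF set_formula_dist[OF assms]] finite_res_traces[OF assms] by (simp add: Ld_def)

lemma pmf_eq_if_eq_on_finite_set_pmf: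
  assumes "finite (set_pmf p)" and "\<And>x. x \<in> set_pmf p \<Longrightarrow> pmf q x = pmf p x"
  shows "q = p"
proof (rule pmf_eqI)
  fix x
  show "pmf q x = pmf p x"
  proof (cases "x \<in> set_pmf p")
    case False
    have "1 + pmf q x = sum (pmf q) (insert x (set_pmf p))"
      using assms False by (simp add: sum_pmf_eq_1)
    also have "\<dots> = measure_pmf.prob q (insert x (set_pmf p))"
      using assms(1) by (simp add: measure_measure_pmf_finite)
    also have "\<dots> \<le> 1" by simp
    finally show ?thesis using False by (simp add: set_pmf_iff pmf_nonneg antisym)
  qed (use assms in simp)
qed

lemma Lsat_eq_image_formula_dist:
  assumes fin_supp: "pts_fin_supp tr" and fin_proc: "finite_process tr u"
  shows "Lsat tr u = formula_dist ` res tr u"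
proof -
  have sat_iff: "sat_dist tr u \<Psi> \<longleftrightarrow>
      (\<exists>R\<in>res tr u. \<forall>\<Phi>\<in>set_pmf \<Psi>. pmf (formula_dist R) \<Phi> = pmf \<Psi> \<Phi>)" for \<Psi>
    unfolding sat_dist_def comp_sat_depth_iff
    by (intro bex_cong ball_cong refl) (simp add: pmf_formula_dist[OF fin_supp fin_proc] TD_def Cmax_tr_def)
  show ?thesis
    unfolding Lsat_def sat_iff using formula_dist_in_Ld[OF fin_supp fin_proc]
    by (auto simp: Ld_def dest: pmf_eq_if_eq_on_finite_set_pmf)
qed

section \<open>The distances \<open>D\<^sub>T\<close> and \<open>D\<close>\<close>

lemma D_form_eq_total_variation:
  assumes "finite S" and "set_pmf P1 \<subseteq> S" and "set_pmf P2 \<subseteq> S"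
  shows "D_form P1 P2 = 1 - (\<Sum>\<Phi>\<in>S. min (pmf P1 \<Phi>) (pmf P2 \<Phi>))"
  unfolding D_form_def d_form_def[abs_def]
  by (rule kantorovich_discrete) (use assms in \<open>auto simp: set_pmf_iff sum_pmf_eq_1\<close>)

lemma D_T_eq_D_form:
  assumes fin_supp: "pts_fin_supp tr"
    and R1: "finite_process tr u1" "R1 \<in> res tr u1" and R2: "finite_process tr u2" "R2 \<in> res tr u2"
  shows "D_T R1 R2 = D_form (formula_dist R1) (formula_dist R2)"
proof -
  let ?A = "res_traces R1 \<union> res_traces R2"
  have fin: "finite ?A" using finite_res_traces[OF fin_supp R1] finite_res_traces[OF fin_supp R2] by simp
  have sum_TD: "sum (TD R) ?A = 1" if "R \<in> {R1, R2}" "finite_process tr u" "R \<in> res tr u" for R u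
  proof -
    have "sum (TD R) ?A = sum (TD R) (res_traces R)"
      using fin that(1) by (intro sum.mono_neutral_right) (auto simp: TD_eq_0_if_notin_res_traces)
    then show ?thesis using sum_TD_res_traces[OF fin_supp that(2,3)] by simp
  qed
  have "D_T R1 R2 = 1 - (\<Sum>\<alpha>\<in>?A. min (TD R1 \<alpha>) (TD R2 \<alpha>))"
    unfolding D_T_def d_trace_def[abs_def]
    using fin sum_TD[OF _ R1] sum_TD[OF _ R2]
    by (intro kantorovich_discrete) (auto simp: TD_nonneg TD_eq_0_if_notin_res_traces)
  also have "\<dots> = D_form (formula_dist R1) (formula_dist R2)"
    using set_formula_dist[OF fin_supp R1] set_formula_dist[OF fin_supp R2] fin
    by (subst D_form_eq_total_variation[of "trace_formula ` ?A"])
       (auto simp: sum_image_trace_formula pmf_formula_dist[OF fin_supp R1] pmf_formula_dist[OF fin_supp R2])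
  finally show ?thesis .
qed

lemma D_form_pseudometric:
  assumes "P1 \<in> Ld" and "P2 \<in> Ld" and "P3 \<in> Ld"
  shows "D_form P1 P1 = 0" and "0 \<le> D_form P1 P2" and "D_form P1 P2 \<le> 1"
    and "D_form P1 P3 \<le> D_form P1 P2 + D_form P2 P3"
proof -
  define S where "S = set_pmf P1 \<union> set_pmf P2 \<union> set_pmf P3"
  have S: "finite S" "set_pmf P1 \<subseteq> S" "set_pmf P2 \<subseteq> S" "set_pmf P3 \<subseteq> S"
    using assms by (auto simp: S_def Ld_def)
  note D12 = D_form_eq_total_variation[OF S(1,2,3)]
    and D23 = D_form_eq_total_variation[OF S(1,3,4)]
    and D13 = D_form_eq_total_variation[OF S(1,2,4)]
  have sum1: "sum (pmf P1) S = 1" "sum (pmf P2) S = 1" using S by (auto intro: sum_pmf_eq_1)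
  show "D_form P1 P1 = 0" using D_form_eq_total_variation[OF S(1,2,2)] sum1 by simp
  have "(\<Sum>x\<in>S. min (pmf P1 x) (pmf P2 x)) \<le> sum (pmf P1) S" by (rule sum_mono) simp
  then show "0 \<le> D_form P1 P2" using D12 sum1 by simp
  have "0 \<le> (\<Sum>x\<in>S. min (pmf P1 x) (pmf P2 x))" by (rule sum_nonneg) simp
  then show "D_form P1 P2 \<le> 1" using D12 by simp
  have "(\<Sum>x\<in>S. min (pmf P1 x) (pmf P2 x)) + (\<Sum>x\<in>S. min (pmf P2 x) (pmf P3 x))
      \<le> sum (pmf P2) S + (\<Sum>x\<in>S. min (pmf P1 x) (pmf P3 x))"
    unfolding sum.distrib[symmetric] by (rule sum_mono) (auto simp: min_def)
  then show "D_form P1 P3 \<le> D_form P1 P2 + D_form P2 P3" using D12 D23 D13 sum1 by simp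
qed

section \<open>Hausdorff distance of sets of points\<close>

lemma hausdorff_image:
  assumes "\<And>x y. x \<in> X \<Longrightarrow> y \<in> Y \<Longrightarrow> d x y = \<delta> (f x) (f y) \<and> d y x = \<delta> (f y) (f x)"
  shows "hausdorff d X Y = hausdorff \<delta> (f ` X) (f ` Y)"
  unfolding hausdorff_def image_image using assms
  by (intro arg_cong2[where f = max] arg_cong[where f = sup0] image_cong refl arg_cong[where f = inf1])
     simp_all

definition point_set_dist :: "('p \<Rightarrow> 'p \<Rightarrow> real) \<Rightarrow> 'p \<Rightarrow> 'p set \<Rightarrow> real" where
  "point_set_dist \<delta> p X = Inf (\<delta> p ` X)"

locale unit_pseudometric =
  fixes M :: "'p set" and \<delta> :: "'p \<Rightarrow> 'p \<Rightarrow> real"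
  assumes dist_self: "x \<in> M \<Longrightarrow> \<delta> x x = 0"
    and dist_nonneg: "x \<in> M \<Longrightarrow> y \<in> M \<Longrightarrow> 0 \<le> \<delta> x y"
    and dist_le_1: "x \<in> M \<Longrightarrow> y \<in> M \<Longrightarrow> \<delta> x y \<le> 1"
    and dist_triangle: "x \<in> M \<Longrightarrow> y \<in> M \<Longrightarrow> z \<in> M \<Longrightarrow> \<delta> x z \<le> \<delta> x y + \<delta> y z"
begin

lemma point_set_dist_le: "p \<in> M \<Longrightarrow> X \<subseteq> M \<Longrightarrow> x \<in> X \<Longrightarrow> point_set_dist \<delta> p X \<le> \<delta> p x"
  unfolding point_set_dist_def by (rule cInf_lower) (auto intro!: bdd_belowI[where m = 0] dist_nonneg)

lemma point_set_dist_greatest: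
  "X \<noteq> {} \<Longrightarrow> (\<And>x. x \<in> X \<Longrightarrow> c \<le> \<delta> p x) \<Longrightarrow> c \<le> point_set_dist \<delta> p X"
  unfolding point_set_dist_def by (rule cINF_greatest)

lemma point_set_dist_bounds:
  assumes "p \<in> M" and "X \<subseteq> M" and "X \<noteq> {}"
  shows "0 \<le> point_set_dist \<delta> p X" and "point_set_dist \<delta> p X \<le> 1"
proof -
  show "0 \<le> point_set_dist \<delta> p X"
    using assms by (intro point_set_dist_greatest) (auto intro: dist_nonneg)
  obtain x where "x \<in> X" using assms(3) by blast
  then show "point_set_dist \<delta> p X \<le> 1"
    using point_set_dist_le[OF assms(1,2)] dist_le_1 assms by (meson order_trans subsetD)
qed

lemma point_set_dist_member: "X \<subseteq> M \<Longrightarrow> x \<in> X \<Longrightarrow> point_set_dist \<delta> x X = 0"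
  using point_set_dist_le[of x X x] point_set_dist_bounds(1)[of x X] dist_self[of x] by force

lemma point_set_dist_triangle:
  assumes "p \<in> M" and "y \<in> M" and "X \<subseteq> M" and "X \<noteq> {}"
  shows "point_set_dist \<delta> p X \<le> \<delta> p y + point_set_dist \<delta> y X"
proof -
  have "point_set_dist \<delta> p X - \<delta> p y \<le> point_set_dist \<delta> y X"
  proof (rule point_set_dist_greatest[OF assms(4)])
    fix x assume "x \<in> X"
    then show "point_set_dist \<delta> p X - \<delta> p y \<le> \<delta> y x"
      using point_set_dist_le[OF assms(1,3)] dist_triangle[OF assms(1,2)] assms(3) by fastforce
  qed
  then show ?thesis by simp
qed

lemma point_set_dist_le_plus_SUP:
  assumes "p \<in> M" and "X \<subseteq> M" and "Y \<subseteq> M" and "X \<noteq> {}" and "Y \<noteq> {}"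
  shows "point_set_dist \<delta> p X \<le> point_set_dist \<delta> p Y + (SUP y\<in>Y. point_set_dist \<delta> y X)"
proof -
  have "point_set_dist \<delta> p X - (SUP y\<in>Y. point_set_dist \<delta> y X) \<le> point_set_dist \<delta> p Y"
  proof (rule point_set_dist_greatest[OF assms(5)])
    fix y assume y: "y \<in> Y"
    have "point_set_dist \<delta> y X \<le> (SUP y\<in>Y. point_set_dist \<delta> y X)"
      using y assms point_set_dist_bounds(2)
      by (intro cSUP_upper bdd_aboveI[where M = 1]) blast+
    then show "point_set_dist \<delta> p X - (SUP y\<in>Y. point_set_dist \<delta> y X) \<le> \<delta> p y"
      using point_set_dist_triangle[OF assms(1) _ assms(2,4), of y] y assms(3) by force
  qed
  then show ?thesis by simp
qed

lemma hausdorff_eq_SUP_point_set_dist: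
  assumes X: "X \<subseteq> M" "X \<noteq> {}" and Y: "Y \<subseteq> M" "Y \<noteq> {}"
  shows "hausdorff \<delta> X Y = (SUP p\<in>M. \<bar>point_set_dist \<delta> p X - point_set_dist \<delta> p Y\<bar>)"
proof -
  let ?H1 = "SUP x\<in>X. point_set_dist \<delta> x Y" and ?H2 = "SUP y\<in>Y. point_set_dist \<delta> y X"
  let ?S = "SUP p\<in>M. \<bar>point_set_dist \<delta> p X - point_set_dist \<delta> p Y\<bar>"
  have bdd: "bdd_above ((\<lambda>p. \<bar>point_set_dist \<delta> p X - point_set_dist \<delta> p Y\<bar>) ` M)"
    using point_set_dist_bounds X Y by (intro bdd_aboveI2[where M = 1]) (smt (verit))
  have "hausdorff \<delta> X Y = max ?H1 ?H2"
    unfolding hausdorff_def sup0_def inf1_def point_set_dist_def using X Y by simp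
  moreover have "?H1 \<le> ?S"
  proof (rule cSUP_least[OF X(2)])
    fix x assume "x \<in> X"
    then have "point_set_dist \<delta> x Y = \<bar>point_set_dist \<delta> x X - point_set_dist \<delta> x Y\<bar>"
      using point_set_dist_member[OF X(1)] point_set_dist_bounds(1)[OF _ Y] X(1) by auto
    also have "\<dots> \<le> ?S" using \<open>x \<in> X\<close> X(1) bdd by (intro cSUP_upper) auto
    finally show "point_set_dist \<delta> x Y \<le> ?S" .
  qed
  moreover have "?H2 \<le> ?S"
  proof (rule cSUP_least[OF Y(2)])
    fix y assume "y \<in> Y"
    then have "point_set_dist \<delta> y X = \<bar>point_set_dist \<delta> y X - point_set_dist \<delta> y Y\<bar>"
      using point_set_dist_member[OF Y(1)] point_set_dist_bounds(1)[OF _ X] Y(1) by auto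
    also have "\<dots> \<le> ?S" using \<open>y \<in> Y\<close> Y(1) bdd by (intro cSUP_upper) auto
    finally show "point_set_dist \<delta> y X \<le> ?S" .
  qed
  moreover have "?S \<le> max ?H1 ?H2"
    using X Y point_set_dist_le_plus_SUP[OF _ X(1) Y(1) X(2) Y(2)]
      point_set_dist_le_plus_SUP[OF _ Y(1) X(1) Y(2) X(2)]
    by (intro cSUP_least) (fastforce, smt (verit))
  ultimately show ?thesis by linarith
qed

end

interpretation D_form: unit_pseudometric Ld D_form
  by unfold_locales (rule D_form_pseudometric; assumption)+

lemma trivial_resolution_in_res: "({0}, {}, \<lambda>_. s, 0) \<in> res tr s"
  by (simp add: res_def is_resolution_def)

lemma sem_eq_point_set_dist:
  assumes "pts_fin_supp tr" and "finite_process tr u"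
  shows "sem tr \<Psi> u = 1 - point_set_dist D_form \<Psi> (formula_dist ` res tr u)"
  using trivial_resolution_in_res[of u tr]
  by (auto simp: sem_def D_set_def inf1_def point_set_dist_def Lsat_eq_image_formula_dist[OF assms])

theorem theorem20:
  fixes tr :: "('s, 'a) pts" and s t :: 's
  assumes "pts_fin_supp tr"
    and "finite_process tr s" and "finite_process tr t"
  shows "strong_trace_metric tr s t = (SUP \<Psi>\<in>Ld. \<bar>sem tr \<Psi> s - sem tr \<Psi> t\<bar>)"
proof -
  let ?X = "formula_dist ` res tr s" and ?Y = "formula_dist ` res tr t"
  have in_Ld: "?X \<subseteq> Ld" "?Y \<subseteq> Ld" using formula_dist_in_Ld[OF assms(1)] assms(2,3) by blast+
  have nonempty: "?X \<noteq> {}" "?Y \<noteq> {}" using trivial_resolution_in_res[of _ tr] by blast+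
  have "strong_trace_metric tr s t = hausdorff D_form ?X ?Y"
    unfolding strong_trace_metric_def using assms
    by (intro hausdorff_image) (auto simp: D_T_eq_D_form)
  also have "\<dots> = (SUP \<Psi>\<in>Ld. \<bar>point_set_dist D_form \<Psi> ?X - point_set_dist D_form \<Psi> ?Y\<bar>)"
    using D_form.hausdorff_eq_SUP_point_set_dist in_Ld nonempty by blast
  also have "\<dots> = (SUP \<Psi>\<in>Ld. \<bar>sem tr \<Psi> s - sem tr \<Psi> t\<bar>)"
    by (simp add: sem_eq_point_set_dist assms abs_minus_commute)
  finally show ?thesis .
qed

end
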